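(* For any $t_\infty,\delta,\varepsilon>0$ there exists $\eta>0$ such that for all sufficiently large $T$, \[\mathbb{P}\Big(s_T(t+\eta)\subseteq\bigcup_{y\in s_T(t)}B(y,\delta)\ \ \forall t\le t_\infty\Big)\ge1-\varepsilon.\]
   Context: $(\xi(z))_{z\in\mathbb{Z}^d}$ are i.i.d. with $\mathbb{P}(\xi(z)>x)=x^{-\alpha}$ for $x\ge1$, $\alpha>d$. $|\cdot|$ is the $\ell_1$-norm, $B(z,R)$ the open $\ell_1$-ball. $q=d/(\alpha-d)$, $a(T)=(T/\log T)^q$, $r(T)=(T/\log T)^{q+1}$, $L_T=\{z\in\mathbb{R}^d:r(T)z\in\mathbb{Z}^d\}$, $\xi_T(z)=\xi(r(T)z)/a(T)$, $[z]_T=(\lfloor r(T)z_i\rfloor/r(T))_{i=1}^d$. For $z\in L_T$, \[h_T(z)=\inf\Big\{\sum_{j=1}^n q\frac{|y_{j-1}-y_j|}{\xi_T(y_j)}: n\ge0,\ y_0,\dots,y_n\in L_T,\ y_0=z,\ y_n=0\Big\},\] and $s_T(t)=\{z\in\mathbb{R}^d: h_T([z]_T)\le t\}$. *)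

theory Defs
  imports "HOL-Probability.Probability"
begin

text \<open>Points of Z^d are int^'d, points of R^d are real^'d, with d = CARD('d).
  Realisations of the random field are functions X :: int^'d => real.\<close>

definition l1norm :: "real^'d \<Rightarrow> real" where
  "l1norm x = (\<Sum>i\<in>UNIV. \<bar>x $ i\<bar>)"

definition l1ball :: "real^'d \<Rightarrow> real \<Rightarrow> (real^'d) set" where
  "l1ball y R = {x. l1norm (x - y) < R}"

definition qexp :: "nat \<Rightarrow> real \<Rightarrow> real" where
  "qexp d \<alpha> = real d / (\<alpha> - real d)"

definition aT :: "nat \<Rightarrow> real \<Rightarrow> real \<Rightarrow> real" where
  "aT d \<alpha> T = (T / ln T) powr (qexp d \<alpha>)"

definition rT :: "nat \<Rightarrow> real \<Rightarrow> real \<Rightarrow> real" where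
  "rT d \<alpha> T = (T / ln T) powr (qexp d \<alpha> + 1)"

definition LT :: "nat \<Rightarrow> real \<Rightarrow> real \<Rightarrow> (real^'d) set" where
  "LT d \<alpha> T = {z. \<forall>i. rT d \<alpha> T * z $ i \<in> \<int>}"

text \<open>xi_T(z) = xi(r(T) z)/a(T); for z in L_T the floor is exact, r(T) z being a lattice point.\<close>
definition xiT :: "nat \<Rightarrow> real \<Rightarrow> real \<Rightarrow> (int^'d \<Rightarrow> real) \<Rightarrow> real^'d \<Rightarrow> real" where
  "xiT d \<alpha> T X z = X (\<chi> i. \<lfloor>rT d \<alpha> T * z $ i\<rfloor>) / aT d \<alpha> T"

text \<open>h_T(z): infimum over lattice paths y_0 = z, ..., y_n = 0 (n >= 0) in L_T,
  represented as the nonempty list [y_0,...,y_n].\<close>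
definition hT :: "nat \<Rightarrow> real \<Rightarrow> real \<Rightarrow> (int^'d \<Rightarrow> real) \<Rightarrow> real^'d \<Rightarrow> real" where
  "hT d \<alpha> T X z = Inf {(\<Sum>j\<in>{1..<length ys}.
        qexp d \<alpha> * l1norm (ys ! (j - 1) - ys ! j) / xiT d \<alpha> T X (ys ! j)) | ys.
        ys \<noteq> [] \<and> hd ys = z \<and> last ys = 0 \<and> set ys \<subseteq> LT d \<alpha> T}"

definition floorT :: "nat \<Rightarrow> real \<Rightarrow> real \<Rightarrow> real^'d \<Rightarrow> real^'d" where
  "floorT d \<alpha> T z = (\<chi> i. of_int \<lfloor>rT d \<alpha> T * z $ i\<rfloor> / rT d \<alpha> T)"

definition sT :: "nat \<Rightarrow> real \<Rightarrow> real \<Rightarrow> (int^'d \<Rightarrow> real) \<Rightarrow> real \<Rightarrow> (real^'d) set" where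
  "sT d \<alpha> T X t = {z. hT d \<alpha> T X (floorT d \<alpha> T z) \<le> t}"

end

theory Submission
  imports Defs "HOL-Real_Asymp.Real_Asymp"
begin

text \<open>On the event that all potentials are above 1 and those in the box of radius \<open>R r(T)\<close>
  around the origin are at most \<open>K a(T)\<close>, every path of rescaled cost at most \<open>t\<^sub>\<infinity> + 1\<close>
  stays in the \<open>\<ell>\<^sub>1\<close>-ball of radius \<open>R\<close>, since leaving it costs at least \<open>q R / K\<close>.
  If \<open>h\<^sub>T([z]\<^sub>T) \<le> t + \<eta>\<close>, follow a near-optimal path from \<open>[z]\<^sub>T\<close> to \<open>0\<close> until cost
  \<open>\<theta> \<le> 2\<eta>\<close> has been spent: the lattice point reached lies within \<open>2K\<eta>/q + 1/r(T)\<close> of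
  \<open>[z]\<^sub>T\<close> and has \<open>h\<^sub>T \<le> t\<close>. A union bound over the box together with
  \<open>r(T)\<^sup>d = a(T)\<^sup>\<alpha>\<close> bounds the probability of the bad event by \<open>(3R)\<^sup>d K\<^sup>-\<^sup>\<alpha>\<close>, which is small
  for large \<open>K\<close> because \<open>R\<close> grows only linearly in \<open>K\<close> and \<open>\<alpha> > d\<close>.\<close>

lemma l1norm_nonneg: "l1norm x \<ge> 0"
  unfolding l1norm_def by (simp add: sum_nonneg)

lemma l1norm_zero [simp]: "l1norm 0 = 0"
  unfolding l1norm_def by simp

lemma l1norm_triangle_diff: "l1norm (x - z) \<le> l1norm (x - y) + l1norm (y - z)"
  unfolding l1norm_def sum.distrib[symmetric] by (intro sum_mono) simp

lemma abs_component_le_l1norm: "\<bar>x $ i\<bar> \<le> l1norm x"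
  unfolding l1norm_def by (rule member_le_sum) auto

fun path_cost :: "real \<Rightarrow> (real^'d \<Rightarrow> real) \<Rightarrow> (real^'d) list \<Rightarrow> real" where
  "path_cost q f (x # y # ys) = q * l1norm (x - y) / f y + path_cost q f (y # ys)"
| "path_cost q f _ = 0"

lemma path_cost_eq_sum:
  "path_cost q f ys = (\<Sum>j\<in>{1..<length ys}. q * l1norm (ys ! (j - 1) - ys ! j) / f (ys ! j))"
proof (induction q f ys rule: path_cost.induct)
  case (1 q f x y ys)
  let ?step = "\<lambda>zs j. q * l1norm (zs ! (j - 1) - zs ! j) / f (zs ! j)"
  have "{1..<length (x # y # ys)} = insert 1 {2..<length (x # y # ys)}" by auto
  then have "sum (?step (x # y # ys)) {1..<length (x # y # ys)}
      = q * l1norm (x - y) / f y + sum (?step (x # y # ys)) {2..<length (x # y # ys)}"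
    by simp
  also have "sum (?step (x # y # ys)) {2..<length (x # y # ys)} = sum (?step (y # ys)) {1..<length (y # ys)}"
    unfolding numeral_2_eq_2 length_Cons One_nat_def sum.shift_bounds_Suc_ivl by simp
  finally show ?case using 1 by simp
qed auto

lemma path_cost_nonneg: "q \<ge> 0 \<Longrightarrow> \<forall>y\<in>set ys. f y > 0 \<Longrightarrow> path_cost q f ys \<ge> 0"
  by (induction q f ys rule: path_cost.induct) (auto intro!: add_nonneg_nonneg divide_nonneg_pos mult_nonneg_nonneg l1norm_nonneg)

definition inf_path_cost :: "real \<Rightarrow> (real^'d \<Rightarrow> real) \<Rightarrow> (real^'d) set \<Rightarrow> real^'d \<Rightarrow> real" where
  "inf_path_cost q f L z =
     Inf {path_cost q f ys | ys. ys \<noteq> [] \<and> hd ys = z \<and> last ys = 0 \<and> set ys \<subseteq> L}"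

lemma inf_path_cost_le:
  assumes "q \<ge> 0" "\<forall>y\<in>L. f y > 0" "ys \<noteq> []" "hd ys = z" "last ys = 0" "set ys \<subseteq> L"
  shows "inf_path_cost q f L z \<le> path_cost q f ys"
  unfolding inf_path_cost_def
proof (rule cInf_lower)
  show "bdd_below {path_cost q f ys | ys. ys \<noteq> [] \<and> hd ys = z \<and> last ys = 0 \<and> set ys \<subseteq> L}"
    using assms(1,2) by (auto intro!: bdd_belowI[of _ 0] path_cost_nonneg)
qed (use assms in blast)

lemma inf_path_cost_approx:
  assumes "z \<in> L" "0 \<in> L" "e > 0"
  obtains ys where "ys \<noteq> []" "hd ys = z" "last ys = 0" "set ys \<subseteq> L"
    "path_cost q f ys < inf_path_cost q f L z + e"
proof -
  let ?S = "{path_cost q f ys | ys. ys \<noteq> [] \<and> hd ys = z \<and> last ys = 0 \<and> set ys \<subseteq> L}"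
  have "path_cost q f [z, 0] \<in> ?S" using assms(1,2) by force
  then have "\<exists>c\<in>?S. c < Inf ?S + e" using assms(3) by (intro cInf_lessD) auto
  then show ?thesis using that unfolding inf_path_cost_def by blast
qed

lemma path_cost_ge_l1norm:
  assumes "q > 0" "K > 0"
  shows "ys \<noteq> [] \<Longrightarrow> last ys = 0 \<Longrightarrow> \<forall>y\<in>set (tl ys). 0 < f y \<and> f y \<le> K
    \<Longrightarrow> q / K * l1norm (hd ys) \<le> path_cost q f ys"
proof (induction ys rule: induct_list012)
  case (3 x y ys)
  then have IH: "q / K * l1norm y \<le> path_cost q f (y # ys)" and fy: "0 < f y" "f y \<le> K"
    by auto
  have "q / K * l1norm x \<le> q / K * (l1norm (x - y) + l1norm y)"
    using l1norm_triangle_diff[where z = 0] assms by (intro mult_left_mono) auto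
  also have "\<dots> = q * l1norm (x - y) / K + q / K * l1norm y"
    by (simp add: distrib_left)
  also have "q * l1norm (x - y) / K \<le> q * l1norm (x - y) / f y"
    using fy assms by (intro divide_left_mono mult_nonneg_nonneg l1norm_nonneg) auto
  finally show ?case using IH by simp
qed auto

text \<open>The stretch from the last point outside the ball back to the origin runs inside the ball,
  where every unit of \<open>\<ell>\<^sub>1\<close>-length costs at least \<open>q / K\<close>.\<close>

lemma path_cost_leave_ball:
  assumes "q > 0" "K > 0"
  shows "ys \<noteq> [] \<Longrightarrow> last ys = 0 \<Longrightarrow> \<forall>y\<in>set ys. 0 < f y
    \<Longrightarrow> \<forall>y\<in>set ys. l1norm y < R \<longrightarrow> f y \<le> K
    \<Longrightarrow> (\<forall>y\<in>set ys. l1norm y < R) \<or> q * R / K \<le> path_cost q f ys"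
proof (induction ys rule: induct_list012)
  case (3 x y ys)
  have step_nonneg: "q * l1norm (x - y) / f y \<ge> 0"
    using 3 assms by (auto intro!: divide_nonneg_pos mult_nonneg_nonneg l1norm_nonneg)
  show ?case
  proof (cases "\<forall>v\<in>set (y # ys). l1norm v < R")
    case inside: True
    show ?thesis
    proof (cases "l1norm x < R")
      case False
      have "q / K * l1norm x \<le> path_cost q f (x # y # ys)"
        using path_cost_ge_l1norm[OF assms, of "x # y # ys" f] 3(3-6) inside by auto
      moreover have "q / K * R \<le> q / K * l1norm x" using False assms by (intro mult_left_mono) auto
      ultimately show ?thesis by simp
    qed (use inside in auto)
  qed (use 3 step_nonneg in auto)
qed (use assms in \<open>auto simp: divide_le_0_iff mult_le_0_iff\<close>)

definition grid :: "real \<Rightarrow> (real^'d) set" where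
  "grid r = {z. \<forall>i. r * z $ i \<in> \<int>}"

lemma zero_in_grid [simp]: "0 \<in> grid r"
  unfolding grid_def by simp

lemma grid_coord:
  assumes "r > 0" "z \<in> grid r"
  shows "z $ i = of_int \<lfloor>r * z $ i\<rfloor> / r"
proof -
  from assms(2) obtain k where "r * z $ i = of_int k"
    unfolding grid_def by (auto elim: Ints_cases)
  then show ?thesis using assms(1) by (simp add: field_simps)
qed

lemma l1norm_grid_diff:
  assumes "r > 0" "\<forall>i. z $ i = of_int (u $ i) / r" "\<forall>i. z' $ i = of_int (u' $ i) / r"
  shows "l1norm (z - z') = of_int (\<Sum>i\<in>UNIV. \<bar>u $ i - u' $ i\<bar>) / r"
  unfolding l1norm_def using assms
  by (simp add: sum_divide_distrib flip: diff_divide_distrib)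

lemma int_vec_walk:
  fixes u0 u1 :: "int^'d"
  shows "int m \<le> (\<Sum>i\<in>UNIV. \<bar>u0 $ i - u1 $ i\<bar>) \<Longrightarrow>
    \<exists>v. (\<forall>i. min (u0 $ i) (u1 $ i) \<le> v $ i \<and> v $ i \<le> max (u0 $ i) (u1 $ i))
      \<and> (\<Sum>i\<in>UNIV. \<bar>u0 $ i - v $ i\<bar>) = int m"
proof (induction m)
  case 0
  show ?case by (rule exI[of _ u0]) auto
next
  case (Suc m)
  then obtain v where v_between: "\<forall>i. min (u0 $ i) (u1 $ i) \<le> v $ i \<and> v $ i \<le> max (u0 $ i) (u1 $ i)"
    and v_dist: "(\<Sum>i\<in>UNIV. \<bar>u0 $ i - v $ i\<bar>) = int m" by auto
  obtain i where i: "v $ i \<noteq> u1 $ i"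
  proof -
    have "v \<noteq> u1" using v_dist Suc.prems by auto
    then show thesis using that by (auto simp: vec_eq_iff)
  qed
  define v' where "v' = (\<chi> j. if j = i then v $ j + sgn (u1 $ i - v $ i) else v $ j)"
  have "min (u0 $ j) (u1 $ j) \<le> v' $ j \<and> v' $ j \<le> max (u0 $ j) (u1 $ j)" for j
    using v_between[rule_format, of j] i unfolding v'_def by (cases "j = i") (auto simp: sgn_if)
  moreover have "\<bar>u0 $ j - v' $ j\<bar> = \<bar>u0 $ j - v $ j\<bar> + (if j = i then 1 else 0)" for j
    using v_between[rule_format, of j] i unfolding v'_def by (cases "j = i") (auto simp: sgn_if)
  then have "(\<Sum>j\<in>UNIV. \<bar>u0 $ j - v' $ j\<bar>) = int (Suc m)"
    using v_dist by (simp add: sum.distrib)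
  ultimately show ?case by blast
qed

lemma grid_point_between:
  fixes y0 y1 :: "real^'d"
  assumes r: "r > 0" and y0: "y0 \<in> grid r" and y1: "y1 \<in> grid r"
    and s: "0 \<le> s" "s \<le> l1norm (y0 - y1)"
  obtains w where "w \<in> grid r" "s \<le> l1norm (y0 - w)" "l1norm (y0 - w) \<le> s + 1 / r"
    "l1norm (w - y1) = l1norm (y0 - y1) - l1norm (y0 - w)"
proof -
  define u0 :: "int^'d" where "u0 = (\<chi> i. \<lfloor>r * y0 $ i\<rfloor>)"
  define u1 :: "int^'d" where "u1 = (\<chi> i. \<lfloor>r * y1 $ i\<rfloor>)"
  have y0_u0: "\<forall>i. y0 $ i = of_int (u0 $ i) / r" using grid_coord[OF r y0] unfolding u0_def by simp
  have y1_u1: "\<forall>i. y1 $ i = of_int (u1 $ i) / r" using grid_coord[OF r y1] unfolding u1_def by simp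
  define total where "total = (\<Sum>i\<in>UNIV. \<bar>u0 $ i - u1 $ i\<bar>)"
  have l1_total: "l1norm (y0 - y1) = of_int total / r"
    unfolding total_def by (rule l1norm_grid_diff[OF r y0_u0 y1_u1])
  have rs: "0 \<le> r * s" using r s(1) by simp
  define m where "m = nat \<lceil>r * s\<rceil>"
  have m_bounds: "r * s \<le> real m" "real m \<le> r * s + 1"
    unfolding m_def using rs by (auto simp: of_nat_nat)
  have "r * s \<le> of_int total" using s(2) l1_total r by (simp add: field_simps)
  then have "\<lceil>r * s\<rceil> \<le> total" by (simp add: ceiling_le_iff)
  moreover have "int m = \<lceil>r * s\<rceil>" unfolding m_def using rs by (intro nat_0_le) simp
  ultimately have "int m \<le> total" by simp
  then obtain v where v_between: "\<forall>i. min (u0 $ i) (u1 $ i) \<le> v $ i \<and> v $ i \<le> max (u0 $ i) (u1 $ i)"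
    and v_dist: "(\<Sum>i\<in>UNIV. \<bar>u0 $ i - v $ i\<bar>) = int m"
    using int_vec_walk[of m u0 u1] unfolding total_def by blast
  define w :: "real^'d" where "w = (\<chi> i. of_int (v $ i) / r)"
  have w_v: "\<forall>i. w $ i = of_int (v $ i) / r" unfolding w_def by simp
  have l1_y0_w: "l1norm (y0 - w) = real m / r"
    using l1norm_grid_diff[OF r y0_u0 w_v] v_dist by simp
  have "(\<Sum>i\<in>UNIV. \<bar>v $ i - u1 $ i\<bar>) = (\<Sum>i\<in>UNIV. \<bar>u0 $ i - u1 $ i\<bar> - \<bar>u0 $ i - v $ i\<bar>)"
  proof (rule sum.cong)
    fix i show "\<bar>v $ i - u1 $ i\<bar> = \<bar>u0 $ i - u1 $ i\<bar> - \<bar>u0 $ i - v $ i\<bar>"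
      using v_between[rule_format, of i] by (simp add: min_def max_def split: if_splits)
  qed simp
  then have "(\<Sum>i\<in>UNIV. \<bar>v $ i - u1 $ i\<bar>) = total - int m"
    using v_dist unfolding total_def sum_subtractf by simp
  then have l1_w_y1: "l1norm (w - y1) = of_int (total - int m) / r"
    using l1norm_grid_diff[OF r w_v y1_u1] by simp
  show ?thesis
  proof (rule that)
    show "w \<in> grid r" unfolding grid_def w_def using r by simp
    show "s \<le> l1norm (y0 - w)" "l1norm (y0 - w) \<le> s + 1 / r"
      using m_bounds r unfolding l1_y0_w by (simp_all add: field_simps)
    show "l1norm (w - y1) = l1norm (y0 - y1) - l1norm (y0 - w)"
      using r unfolding l1_w_y1 l1_total l1_y0_w by (simp add: diff_divide_distrib)
  qed
qed

text \<open>If \<open>\<theta>\<close> is used up within the first step, stop at a grid point of that segment, losing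
  at most the mesh \<open>1/r\<close>; otherwise recurse on the tail.\<close>

lemma inf_path_cost_along_path:
  assumes q: "q > 0" and r: "r > 0" and f_pos: "\<forall>y\<in>grid r. f y > 0"
  shows "ys \<noteq> [] \<Longrightarrow> last ys = 0 \<Longrightarrow> set ys \<subseteq> grid r \<Longrightarrow> \<forall>y\<in>set ys. f y \<le> K
    \<Longrightarrow> 0 \<le> \<theta> \<Longrightarrow> \<theta> \<le> path_cost q f ys
    \<Longrightarrow> \<exists>w\<in>grid r. l1norm (hd ys - w) \<le> K * \<theta> / q + 1 / r
          \<and> inf_path_cost q f (grid r) w \<le> path_cost q f ys - \<theta>"
proof (induction ys arbitrary: \<theta> rule: induct_list012)
  case (2 x)
  then have "x = 0" "\<theta> = 0" by auto
  moreover have "inf_path_cost q f (grid r) 0 \<le> path_cost q f [0]"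
    using q f_pos by (intro inf_path_cost_le) auto
  ultimately show ?case using r by (intro bexI[of _ 0]) auto
next
  case (3 x y ys)
  define c where "c = q * l1norm (x - y) / f y"
  have y: "y \<in> grid r" "0 < f y" "f y \<le> K" and x: "x \<in> grid r" using 3 f_pos by auto
  have c_nonneg: "c \<ge> 0" unfolding c_def using y q by (auto intro!: divide_nonneg_pos mult_nonneg_nonneg l1norm_nonneg)
  have cost: "path_cost q f (x # y # ys) = c + path_cost q f (y # ys)" unfolding c_def by simp
  have l1_xy: "l1norm (x - y) = c * f y / q" unfolding c_def using y q by simp
  show ?case
  proof (cases "\<theta> \<le> c")
    case True
    define s where "s = \<theta> * f y / q"
    have s: "0 \<le> s" "s \<le> l1norm (x - y)"
      unfolding s_def l1_xy using True "3.prems"(5) y q by (auto intro!: divide_right_mono mult_right_mono)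
    obtain w where w: "w \<in> grid r" "s \<le> l1norm (x - w)" "l1norm (x - w) \<le> s + 1 / r"
      "l1norm (w - y) = l1norm (x - y) - l1norm (x - w)"
      using grid_point_between[OF r x y(1) s] by blast
    have "inf_path_cost q f (grid r) w \<le> path_cost q f (w # y # ys)"
      using 3 w(1) q f_pos by (intro inf_path_cost_le) auto
    also have "\<dots> \<le> q * (l1norm (x - y) - s) / f y + path_cost q f (y # ys)"
      using w y q by (auto intro!: divide_right_mono mult_left_mono)
    also have "q * (l1norm (x - y) - s) / f y = c - \<theta>"
      unfolding c_def s_def using y q by (simp add: field_simps)
    finally have "inf_path_cost q f (grid r) w \<le> path_cost q f (x # y # ys) - \<theta>"
      using cost by simp
    moreover have "s \<le> K * \<theta> / q"
      unfolding s_def using y q "3.prems"(5)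
      by (intro divide_right_mono) (use mult_left_mono[of "f y" K \<theta>] in \<open>simp_all add: mult.commute\<close>)
    ultimately show ?thesis using w by (intro bexI[of _ w]) auto
  next
    case False
    then have "\<exists>w\<in>grid r. l1norm (y - w) \<le> K * (\<theta> - c) / q + 1 / r
        \<and> inf_path_cost q f (grid r) w \<le> path_cost q f (y # ys) - (\<theta> - c)"
      using "3.IH"(2)[of "\<theta> - c"] "3.prems" cost by simp
    then obtain w where w: "w \<in> grid r" "l1norm (y - w) \<le> K * (\<theta> - c) / q + 1 / r"
      "inf_path_cost q f (grid r) w \<le> path_cost q f (y # ys) - (\<theta> - c)"
      by blast
    have "c * f y / q \<le> c * K / q"
      using y q c_nonneg by (intro divide_right_mono mult_left_mono) auto
    then have "l1norm (x - w) \<le> c * K / q + (K * (\<theta> - c) / q + 1 / r)"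
      using l1norm_triangle_diff[of x w y] w(2) l1_xy by linarith
    also have "\<dots> = K * \<theta> / q + 1 / r" using q by (simp add: field_simps)
    finally show ?thesis using w cost by auto
  qed
qed simp

text \<open>A near-optimal path costs less than \<open>t + 2\<eta>\<close>, so it cannot leave the ball; spend its
  excess over \<open>t\<close> along it.\<close>

lemma inf_path_cost_sublevel_near:
  assumes q: "q > 0" and K: "K > 0" and r: "r > 0" and f_pos: "\<forall>y\<in>grid r. f y > 0"
    and f_le: "\<forall>y\<in>grid r. l1norm y < R \<longrightarrow> f y \<le> K" and escape: "t + 2 * \<eta> < q * R / K"
    and t: "0 \<le> t" and \<eta>: "\<eta> > 0" and z: "z \<in> grid r"
    and h_z: "inf_path_cost q f (grid r) z \<le> t + \<eta>"
  obtains w where "w \<in> grid r" "l1norm (z - w) \<le> 2 * K * \<eta> / q + 1 / r"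
    "inf_path_cost q f (grid r) w \<le> t"
proof (cases "inf_path_cost q f (grid r) z \<le> t")
  case True
  then show ?thesis using that z r K q \<eta> by simp
next
  case False
  obtain ys where ys: "ys \<noteq> []" "hd ys = z" "last ys = 0" "set ys \<subseteq> grid r"
    and near_opt: "path_cost q f ys < inf_path_cost q f (grid r) z + \<eta>"
    using inf_path_cost_approx[OF z zero_in_grid \<eta>] by blast
  have h_le: "inf_path_cost q f (grid r) z \<le> path_cost q f ys"
    using inf_path_cost_le[OF _ f_pos ys] q by simp
  have "(\<forall>y\<in>set ys. l1norm y < R) \<or> q * R / K \<le> path_cost q f ys"
    using ys f_pos f_le by (intro path_cost_leave_ball[OF q K]) auto
  then have "\<forall>y\<in>set ys. f y \<le> K" using near_opt h_z escape f_le ys(4) by auto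
  moreover have "0 \<le> path_cost q f ys - t" "path_cost q f ys - t \<le> path_cost q f ys"
    using False h_le t by auto
  ultimately have "\<exists>w\<in>grid r. l1norm (hd ys - w) \<le> K * (path_cost q f ys - t) / q + 1 / r
      \<and> inf_path_cost q f (grid r) w \<le> path_cost q f ys - (path_cost q f ys - t)"
    by (rule inf_path_cost_along_path[OF q r f_pos ys(1,3,4)])
  then obtain w where "w \<in> grid r" "l1norm (z - w) \<le> K * (path_cost q f ys - t) / q + 1 / r"
    "inf_path_cost q f (grid r) w \<le> t"
    using ys(2) by auto
  moreover have "K * (path_cost q f ys - t) / q \<le> 2 * K * \<eta> / q"
    using near_opt h_z K q by (intro divide_right_mono) auto
  ultimately show ?thesis using that by simp
qed

lemma LT_eq_grid: "LT d \<alpha> T = grid (rT d \<alpha> T)"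
  unfolding LT_def grid_def ..

lemma hT_eq_inf_path_cost:
  "hT d \<alpha> T X z = inf_path_cost (qexp d \<alpha>) (xiT d \<alpha> T X) (grid (rT d \<alpha> T)) z"
  unfolding hT_def inf_path_cost_def LT_eq_grid path_cost_eq_sum ..

lemma floorT_in_grid: "rT d \<alpha> T > 0 \<Longrightarrow> floorT d \<alpha> T z \<in> grid (rT d \<alpha> T)"
  unfolding floorT_def grid_def by simp

lemma floorT_grid: "rT d \<alpha> T > 0 \<Longrightarrow> w \<in> grid (rT d \<alpha> T) \<Longrightarrow> floorT d \<alpha> T w = w"
  unfolding floorT_def vec_eq_iff using grid_coord[of "rT d \<alpha> T" w] by simp

lemma l1norm_floorT_le:
  fixes z :: "real^'d"
  assumes r: "rT d \<alpha> T > 0"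
  shows "l1norm (z - floorT d \<alpha> T z) \<le> CARD('d) / rT d \<alpha> T"
proof -
  let ?r = "rT d \<alpha> T"
  have "\<bar>z $ i - of_int \<lfloor>?r * z $ i\<rfloor> / ?r\<bar> \<le> 1 / ?r" for i
  proof -
    have "of_int \<lfloor>?r * z $ i\<rfloor> \<le> ?r * z $ i" "?r * z $ i < of_int \<lfloor>?r * z $ i\<rfloor> + 1"
      by linarith+
    then have "of_int \<lfloor>?r * z $ i\<rfloor> / ?r \<le> z $ i" "z $ i < (of_int \<lfloor>?r * z $ i\<rfloor> + 1) / ?r"
      using r by (simp_all add: field_simps)
    then show ?thesis using r by (simp add: add_divide_distrib)
  qed
  then have "l1norm (z - floorT d \<alpha> T z) \<le> (\<Sum>i\<in>(UNIV::'d set). 1 / ?r)"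
    unfolding l1norm_def floorT_def by (intro sum_mono) simp
  then show ?thesis by simp
qed

definition int_box :: "nat \<Rightarrow> (int^'d) set" where
  "int_box N = {u. \<forall>i. \<bar>u $ i\<bar> \<le> int N}"

lemma grid_floor_in_int_box:
  assumes r: "r > 0" and y: "y \<in> grid r" and "l1norm y < R" and "R * r \<le> real N"
  shows "(\<chi> i. \<lfloor>r * y $ i\<rfloor>) \<in> int_box N"
  unfolding int_box_def
proof (intro CollectI allI)
  fix i
  have floor_eq: "of_int \<lfloor>r * y $ i\<rfloor> = r * y $ i"
    using grid_coord[OF r y, of i] r by (simp add: field_simps)
  have "of_int \<bar>\<lfloor>r * y $ i\<rfloor>\<bar> = r * \<bar>y $ i\<bar>"
    using r by (simp only: of_int_abs floor_eq abs_mult abs_of_pos)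
  also have "\<dots> \<le> r * l1norm y" using r by (simp add: abs_component_le_l1norm)
  also have "\<dots> \<le> r * R" using assms(3) r by (intro mult_left_mono) auto
  also have "\<dots> \<le> real N" using assms(4) by (simp add: mult.commute)
  finally show "\<bar>(\<chi> i. \<lfloor>r * y $ i\<rfloor>) $ i\<bar> \<le> int N" by simp
qed

lemma sT_subset_thickening:
  fixes X :: "int^'d \<Rightarrow> real" and \<alpha> T :: real
  defines "q \<equiv> qexp CARD('d) \<alpha>" and "r \<equiv> rT CARD('d) \<alpha> T" and "a \<equiv> aT CARD('d) \<alpha> T"
  assumes q: "q > 0" and r: "r > 0" and a: "a > 0" and K: "K > 0" and N: "R * r \<le> real N"
    and X_pos: "\<forall>u. X u > 0" and X_box: "\<forall>u\<in>int_box N. X u \<le> K * a"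
    and escape: "t + 2 * \<eta> < q * R / K" and t: "0 \<le> t" and \<eta>: "\<eta> > 0"
    and close: "2 * K * \<eta> / q + (CARD('d) + 1) / r < \<delta>"
  shows "sT CARD('d) \<alpha> T X (t + \<eta>) \<subseteq> (\<Union>y\<in>sT CARD('d) \<alpha> T X t. l1ball y \<delta>)"
proof
  define f where "f = xiT CARD('d) \<alpha> T X"
  have h_eq: "hT CARD('d) \<alpha> T X = inf_path_cost q f (grid r)"
    unfolding hT_eq_inf_path_cost q_def r_def f_def ..
  have f_eq: "f y = X (\<chi> i. \<lfloor>r * y $ i\<rfloor>) / a" for y
    unfolding f_def xiT_def r_def a_def ..
  have f_pos: "\<forall>y\<in>grid r. f y > 0"
    using X_pos a by (simp add: f_eq)
  have f_le: "\<forall>y\<in>grid r. l1norm y < R \<longrightarrow> f y \<le> K"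
    using X_box grid_floor_in_int_box[OF r _ _ N] a by (auto simp: f_eq pos_divide_le_eq)
  fix z assume "z \<in> sT CARD('d) \<alpha> T X (t + \<eta>)"
  then have "inf_path_cost q f (grid r) (floorT CARD('d) \<alpha> T z) \<le> t + \<eta>"
    unfolding sT_def h_eq by simp
  then obtain w where w: "w \<in> grid r" "l1norm (floorT CARD('d) \<alpha> T z - w) \<le> 2 * K * \<eta> / q + 1 / r"
    "inf_path_cost q f (grid r) w \<le> t"
    using inf_path_cost_sublevel_near[OF q K r f_pos f_le escape t \<eta>] floorT_in_grid r
    unfolding r_def by blast
  have "floorT CARD('d) \<alpha> T w = w"
    using floorT_grid r w(1) unfolding r_def by blast
  then have "w \<in> sT CARD('d) \<alpha> T X t"
    unfolding sT_def h_eq using w(3) by simp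
  moreover have "l1norm (z - w) < \<delta>"
  proof -
    have "l1norm (z - w) \<le> l1norm (z - floorT CARD('d) \<alpha> T z) + l1norm (floorT CARD('d) \<alpha> T z - w)"
      by (rule l1norm_triangle_diff)
    also have "\<dots> \<le> CARD('d) / r + (2 * K * \<eta> / q + 1 / r)"
      using l1norm_floorT_le[of "CARD('d)" \<alpha> T z] w(2) r unfolding r_def by simp
    also have "\<dots> = 2 * K * \<eta> / q + (CARD('d) + 1) / r"
      by (simp add: add_divide_distrib)
    finally show ?thesis using close by linarith
  qed
  ultimately show "z \<in> (\<Union>y\<in>sT CARD('d) \<alpha> T X t. l1ball y \<delta>)"
    unfolding l1ball_def by blast
qed

lemma finite_int_box: "finite (int_box N :: (int^'d) set)"
  and card_int_box_le: "card (int_box N :: (int^'d) set) \<le> (2 * N + 1) ^ CARD('d)"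
proof -
  let ?P = "PiE (UNIV :: 'd set) (\<lambda>_. {- int N..int N})"
  have sub: "int_box N \<subseteq> vec_lambda ` ?P"
  proof
    fix u :: "int^'d" assume "u \<in> int_box N"
    then have "(\<lambda>i. u $ i) \<in> ?P" unfolding int_box_def by (auto simp: abs_le_iff) (metis minus_le_iff)
    then show "u \<in> vec_lambda ` ?P" by (intro image_eqI[of _ _ "\<lambda>i. u $ i"]) auto
  qed
  have fin: "finite ?P" by (intro finite_PiE) auto
  then show "finite (int_box N :: (int^'d) set)" using sub finite_subset by blast
  have "card (int_box N :: (int^'d) set) \<le> card (vec_lambda ` ?P)"
    using sub fin by (intro card_mono) auto
  also have "\<dots> \<le> card ?P" by (rule card_image_le[OF fin])
  also have "\<dots> = (2 * N + 1) ^ CARD('d)"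
  proof -
    have "nat (2 * int N + 1) = 2 * N + 1" by simp
    then show ?thesis by (simp add: card_PiE)
  qed
  finally show "card (int_box N :: (int^'d) set) \<le> (2 * N + 1) ^ CARD('d)" .
qed

lemma prob_potentials_bounded:
  fixes M :: "'a measure" and \<xi> :: "'i::countable \<Rightarrow> 'a \<Rightarrow> real" and S :: "'i set" and c :: real
  defines "E \<equiv> {\<omega>\<in>space M. (\<forall>y. \<xi> y \<omega> > 1) \<and> (\<forall>y\<in>S. \<xi> y \<omega> \<le> c)}"
  assumes P: "prob_space M" and meas: "\<forall>y. \<xi> y \<in> borel_measurable M"
    and tail: "\<forall>y x. x \<ge> 1 \<longrightarrow> measure M {\<omega> \<in> space M. \<xi> y \<omega> > x} = x powr (- \<alpha>)"
    and c: "c \<ge> 1" and S: "finite S"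
  shows "E \<in> sets M" and "1 - card S * c powr (- \<alpha>) \<le> measure M E"
proof -
  interpret prob_space M by (rule P)
  have [measurable]: "\<xi> y \<in> borel_measurable M" for y using meas by auto
  define B where "B = {\<omega>\<in>space M. \<forall>y\<in>S. \<xi> y \<omega> \<le> c}"
  have B: "B \<in> sets M" unfolding B_def using S by measurable
  show E: "E \<in> sets M" unfolding E_def using S by measurable
  have "AE \<omega> in M. \<xi> y \<omega> > 1" for y
  proof -
    have "prob {\<omega>\<in>space M. \<xi> y \<omega> > 1} = 1" using tail by simp
    from AE_prob_1[OF this] show ?thesis by auto
  qed
  then have "AE \<omega> in M. \<forall>y. \<xi> y \<omega> > 1" by (simp add: AE_all_countable)
  then have "AE \<omega> in M. \<omega> \<in> E \<longleftrightarrow> \<omega> \<in> B"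
    unfolding E_def B_def by eventually_elim auto
  then have "prob E = prob B" using E B by (rule measure_eq_AE)
  moreover have "prob (space M - B) \<le> (\<Sum>y\<in>S. prob {\<omega>\<in>space M. \<xi> y \<omega> > c})"
  proof -
    have "space M - B = (\<Union>y\<in>S. {\<omega>\<in>space M. \<xi> y \<omega> > c})" unfolding B_def by auto
    then show ?thesis using S by (simp add: measure_UNION_le)
  qed
  moreover have "(\<Sum>y\<in>S. prob {\<omega>\<in>space M. \<xi> y \<omega> > c}) = card S * c powr (- \<alpha>)"
    using tail c by simp
  ultimately show "1 - card S * c powr (- \<alpha>) \<le> prob E" using prob_compl[OF B] by simp
qed

lemma rT_power_eq_aT_powr:
  assumes "real d < \<alpha>" "T / ln T > 0"
  shows "rT d \<alpha> T ^ d = aT d \<alpha> T powr \<alpha>"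
proof -
  have exps: "(qexp d \<alpha> + 1) * real d = qexp d \<alpha> * \<alpha>"
    unfolding qexp_def using assms(1) by (simp add: field_simps)
  have "rT d \<alpha> T > 0" unfolding rT_def powr_gt_zero using assms(2) by linarith
  then have "rT d \<alpha> T ^ d = rT d \<alpha> T powr real d" by (simp add: powr_realpow)
  also have "\<dots> = (T / ln T) powr ((qexp d \<alpha> + 1) * real d)"
    unfolding rT_def by (simp add: powr_powr)
  also have "\<dots> = aT d \<alpha> T powr \<alpha>"
    unfolding aT_def exps by (simp add: powr_powr)
  finally show ?thesis .
qed

text \<open>The relation \<open>r\<^sup>d = a\<^sup>\<alpha>\<close> is what makes the union bound independent of the scale.\<close>

lemma card_int_box_tail_le:
  assumes r: "r > 0" and R: "3 \<le> R * r" and balance: "r ^ d = a powr \<alpha>" and K: "K > 0" and a: "a > 0"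
  shows "real ((2 * nat \<lceil>R * r\<rceil> + 1) ^ d) * (K * a) powr (- \<alpha>) \<le> (3 * R) ^ d * K powr (- \<alpha>)"
proof -
  define N where "N = nat \<lceil>R * r\<rceil>"
  have "real N \<le> R * r + 1" unfolding N_def using R by linarith
  then have "real (2 * N + 1) \<le> 3 * R * r" using R by simp
  then have "real ((2 * N + 1) ^ d) \<le> (3 * R * r) ^ d"
    unfolding of_nat_power by (intro power_mono) auto
  then have "real ((2 * N + 1) ^ d) * (K * a) powr (- \<alpha>)
      \<le> (3 * R) ^ d * K powr (- \<alpha>) * (r ^ d * a powr (- \<alpha>))"
    using K a by (auto intro: mult_right_mono simp: powr_mult power_mult_distrib mult_ac)
  also have "r ^ d * a powr (- \<alpha>) = 1"
    using a unfolding balance by (simp add: powr_add[symmetric])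
  finally show ?thesis unfolding N_def by simp
qed

lemma exists_power_mult_powr_le:
  assumes "real d < \<alpha>" "\<epsilon> > 0"
  shows "\<exists>K\<ge>1. (B * K) ^ d * K powr (- \<alpha>) \<le> \<epsilon>"
proof -
  have "((\<lambda>K. B ^ d * K powr (real d - \<alpha>)) \<longlongrightarrow> B ^ d * 0) at_top"
    using assms(1) by (intro tendsto_mult tendsto_const tendsto_neg_powr filterlim_ident) auto
  then have "eventually (\<lambda>K. B ^ d * K powr (real d - \<alpha>) < \<epsilon>) at_top"
    using assms(2) by (simp add: order_tendstoD)
  then obtain K where K: "K \<ge> 1" "B ^ d * K powr (real d - \<alpha>) < \<epsilon>"
    using eventually_ge_at_top[of 1] by (metis (mono_tags, lifting) eventually_at_top_linorder nle_le)
  have "(B * K) ^ d * K powr (- \<alpha>) = B ^ d * K powr (real d - \<alpha>)"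
    using K(1) by (simp add: power_mult_distrib powr_diff powr_minus_divide powr_realpow)
  then show ?thesis using K by (intro exI[of _ K]) auto
qed

lemma eventually_scales_large:
  assumes "real d < \<alpha>"
  shows "eventually (\<lambda>T. 0 < T / ln T \<and> 1 \<le> aT d \<alpha> T \<and> \<rho> \<le> rT d \<alpha> T) at_top"
proof -
  have q: "qexp d \<alpha> \<ge> 0" unfolding qexp_def using assms by simp
  have "filterlim (\<lambda>T::real. T / ln T) at_top at_top" by real_asymp
  then have "eventually (\<lambda>T. max 1 \<rho> \<le> T / ln T) at_top" unfolding filterlim_at_top by blast
  then show ?thesis
  proof (rule eventually_mono)
    fix T assume X: "max 1 \<rho> \<le> T / ln T"
    have "(T / ln T) powr 1 \<le> (T / ln T) powr (qexp d \<alpha> + 1)"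
      using X q by (intro powr_mono) auto
    then have "T / ln T \<le> rT d \<alpha> T" unfolding rT_def using X by (simp only: powr_one)
    then show "0 < T / ln T \<and> 1 \<le> aT d \<alpha> T \<and> \<rho> \<le> rT d \<alpha> T"
      unfolding aT_def using X q by (auto simp: ge_one_powr_ge_zero)
  qed
qed

lemma prob_potentials_bounded_at_scale:
  fixes M :: "'a measure" and \<xi> :: "int^'d \<Rightarrow> 'a \<Rightarrow> real" and \<alpha> T K R :: real
  defines "r \<equiv> rT CARD('d) \<alpha> T" and "a \<equiv> aT CARD('d) \<alpha> T"
  defines "E \<equiv> {\<omega>\<in>space M. (\<forall>u. \<xi> u \<omega> > 1) \<and> (\<forall>u\<in>int_box (nat \<lceil>R * r\<rceil>). \<xi> u \<omega> \<le> K * a)}"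
  assumes P: "prob_space M" and \<alpha>: "real CARD('d) < \<alpha>"
    and meas: "\<forall>z. \<xi> z \<in> borel_measurable M"
    and tail: "\<forall>z x. x \<ge> 1 \<longrightarrow> measure M {\<omega> \<in> space M. \<xi> z \<omega> > x} = x powr (- \<alpha>)"
    and T: "T / ln T > 0" and a: "a \<ge> 1" and K: "K \<ge> 1" and R: "3 \<le> R * r"
  shows "E \<in> sets M" and "1 - (3 * R) ^ CARD('d) * K powr (- \<alpha>) \<le> measure M E"
proof -
  define N where "N = nat \<lceil>R * r\<rceil>"
  have r: "r > 0" unfolding r_def rT_def powr_gt_zero using T by linarith
  have Ka: "K * a \<ge> 1" using K a mult_mono[of 1 K 1 a] by simp
  have E: "E \<in> sets M"
    "1 - card (int_box N :: (int^'d) set) * (K * a) powr (- \<alpha>) \<le> measure M E"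
    unfolding E_def N_def using prob_potentials_bounded[OF P meas tail Ka finite_int_box] by auto
  then show "E \<in> sets M" by simp
  have "real (card (int_box N :: (int^'d) set)) \<le> real ((2 * N + 1) ^ CARD('d))"
    using card_int_box_le by (rule of_nat_mono)
  then have "real (card (int_box N :: (int^'d) set)) * (K * a) powr (- \<alpha>)
      \<le> real ((2 * N + 1) ^ CARD('d)) * (K * a) powr (- \<alpha>)"
    by (rule mult_right_mono) simp
  also have "\<dots> \<le> (3 * R) ^ CARD('d) * K powr (- \<alpha>)"
    unfolding N_def using K a r R rT_power_eq_aT_powr[OF \<alpha> T]
    by (intro card_int_box_tail_le) (simp_all add: r_def a_def)
  finally show "1 - (3 * R) ^ CARD('d) * K powr (- \<alpha>) \<le> measure M E" using E(2) by linarith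
qed

lemma good_event_at_scale:
  fixes M :: "'a measure" and \<xi> :: "int^'d \<Rightarrow> 'a \<Rightarrow> real" and \<alpha> T :: real
  defines "q \<equiv> qexp CARD('d) \<alpha>" and "r \<equiv> rT CARD('d) \<alpha> T" and "a \<equiv> aT CARD('d) \<alpha> T"
  assumes P: "prob_space M" and \<alpha>: "real CARD('d) < \<alpha>"
    and meas: "\<forall>z. \<xi> z \<in> borel_measurable M"
    and tail: "\<forall>z x. x \<ge> 1 \<longrightarrow> measure M {\<omega> \<in> space M. \<xi> z \<omega> > x} = x powr (- \<alpha>)"
    and T: "T / ln T > 0" and a: "a \<ge> 1" and K: "K \<ge> 1" and R: "R > 0" "3 / R \<le> r"
    and \<delta>: "\<delta> > 0" "4 * (CARD('d) + 1) / \<delta> \<le> r" and \<eta>: "\<eta> > 0" "2 * K * \<eta> / q \<le> \<delta> / 4"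
    and escape: "t_inf + 2 * \<eta> < q * R / K" and \<epsilon>: "(3 * R) ^ CARD('d) * K powr (- \<alpha>) \<le> \<epsilon>"
  shows "\<exists>E\<in>sets M. measure M E \<ge> 1 - \<epsilon> \<and>
           E \<subseteq> {\<omega> \<in> space M. \<forall>t\<in>{0..t_inf}.
              sT CARD('d) \<alpha> T (\<lambda>z. \<xi> z \<omega>) (t + \<eta>)
                \<subseteq> (\<Union>y\<in>sT CARD('d) \<alpha> T (\<lambda>z. \<xi> z \<omega>) t. l1ball y \<delta>)}"
proof -
  define N where "N = nat \<lceil>R * r\<rceil>"
  define E where "E = {\<omega>\<in>space M. (\<forall>u. \<xi> u \<omega> > 1) \<and> (\<forall>u\<in>int_box N. \<xi> u \<omega> \<le> K * a)}"
  have q: "q > 0" unfolding q_def qexp_def using \<alpha> by simp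
  have r: "r > 0" using R by (smt (verit) divide_pos_pos)
  have Rr: "3 \<le> R * r" using R by (simp add: field_simps)
  have "(CARD('d) + 1) / r \<le> \<delta> / 4" using \<delta> r by (simp add: field_simps)
  then have close: "2 * K * \<eta> / q + (CARD('d) + 1) / r < \<delta>" using \<eta>(2) \<delta>(1) by linarith
  have "E \<subseteq> {\<omega> \<in> space M. \<forall>t\<in>{0..t_inf}.
              sT CARD('d) \<alpha> T (\<lambda>z. \<xi> z \<omega>) (t + \<eta>)
                \<subseteq> (\<Union>y\<in>sT CARD('d) \<alpha> T (\<lambda>z. \<xi> z \<omega>) t. l1ball y \<delta>)}"
  proof (rule subsetI, rule CollectI, intro conjI ballI)
    fix \<omega> assume "\<omega> \<in> E"
    then show "\<omega> \<in> space M" unfolding E_def by simp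
  next
    fix \<omega> t assume \<omega>: "\<omega> \<in> E" and t: "t \<in> {0..t_inf}"
    have X_pos: "\<forall>u. \<xi> u \<omega> > 0" and X_box: "\<forall>u\<in>int_box N. \<xi> u \<omega> \<le> K * a"
      using \<omega> unfolding E_def by (auto intro: less_trans[OF zero_less_one])
    have "R * r \<le> real N" unfolding N_def by linarith
    moreover have "t + 2 * \<eta> < q * R / K" "0 \<le> t" using t escape by auto
    moreover have "a > 0" "K > 0" using a K by auto
    ultimately show "sT CARD('d) \<alpha> T (\<lambda>z. \<xi> z \<omega>) (t + \<eta>)
        \<subseteq> (\<Union>y\<in>sT CARD('d) \<alpha> T (\<lambda>z. \<xi> z \<omega>) t. l1ball y \<delta>)"
      using sT_subset_thickening[where X = "\<lambda>z. \<xi> z \<omega>" and K = K and R = R and N = N and t = t]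
        q r X_pos X_box \<eta>(1) close
      unfolding q_def r_def a_def by blast
  qed
  moreover have "E \<in> sets M" "1 - (3 * R) ^ CARD('d) * K powr (- \<alpha>) \<le> measure M E"
    using prob_potentials_bounded_at_scale[OF P \<alpha> meas tail T a[unfolded a_def] K Rr[unfolded r_def]]
    unfolding E_def N_def r_def a_def by blast+
  ultimately show ?thesis using \<epsilon> by (intro bexI[of _ E]) auto
qed

theorem lemma6p1:
  fixes M :: "'a measure" and \<xi> :: "int^'d \<Rightarrow> 'a \<Rightarrow> real" and \<alpha> :: real
    and t_inf \<delta> \<epsilon> :: real
  assumes "prob_space M"
    and "\<alpha> > real CARD('d)"
    and "\<forall>z. \<xi> z \<in> borel_measurable M"
    and "prob_space.indep_vars M (\<lambda>_. borel) \<xi> UNIV"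
    and "\<forall>z x. x \<ge> 1 \<longrightarrow> measure M {\<omega> \<in> space M. \<xi> z \<omega> > x} = x powr (- \<alpha>)"
    and "t_inf > 0" and "\<delta> > 0" and "\<epsilon> > 0"
  shows "\<exists>\<eta>>0. eventually (\<lambda>T. \<exists>E\<in>sets M. measure M E \<ge> 1 - \<epsilon> \<and>
           E \<subseteq> {\<omega> \<in> space M. \<forall>t\<in>{0..t_inf}.
              sT CARD('d) \<alpha> T (\<lambda>z. \<xi> z \<omega>) (t + \<eta>)
                \<subseteq> (\<Union>y\<in>sT CARD('d) \<alpha> T (\<lambda>z. \<xi> z \<omega>) t. l1ball y \<delta>)}) at_top"
proof -
  define q where "q = qexp CARD('d) \<alpha>"
  define C where "C = t_inf + 2"
  have q: "q > 0" unfolding q_def qexp_def using assms(2) by simp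
  obtain K where K: "K \<ge> 1" "(3 * C / q * K) ^ CARD('d) * K powr (- \<alpha>) \<le> \<epsilon>"
    using exists_power_mult_powr_le[OF assms(2,8)] by blast
  define R where "R = K * C / q"
  define \<eta> where "\<eta> = min (1/2) (\<delta> * q / (8 * K))"
  have R: "R > 0" "3 * R = 3 * C / q * K" unfolding R_def C_def using K q assms(6) by auto
  have \<eta>: "\<eta> > 0" "t_inf + 2 * \<eta> < q * R / K" "2 * K * \<eta> / q \<le> \<delta> / 4"
    unfolding \<eta>_def R_def C_def using assms(7) q K by (auto simp: field_simps min_def)
  have "eventually (\<lambda>T. 0 < T / ln T \<and> 1 \<le> aT CARD('d) \<alpha> T
      \<and> max (3 / R) (4 * (CARD('d) + 1) / \<delta>) \<le> rT CARD('d) \<alpha> T) at_top"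
    using eventually_scales_large[OF assms(2)] .
  then show ?thesis
    using good_event_at_scale[OF assms(1,2,3,5) _ _ K(1) R(1) _ assms(7) _ \<eta>(1) \<eta>(3)[unfolded q_def]
        \<eta>(2)[unfolded q_def] K(2)[folded R(2)]]
    by (intro exI[of _ \<eta>] conjI \<eta>(1)) (auto elim!: eventually_mono)
qed

end
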